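(* Let $a\leq b$ be integers and let $f:[a,b]\to\mathbb{R}$ be twice differentiable with $|f''|\leq M$ on $[a,b]$. For all $\alpha\in f'([a,b])$ and all $R\geq 1$, \[ \left|\{n\in(a,b]\cap\mathbb{Z}:\ \lfloor f(n)\rfloor\neq\lfloor n\alpha+f(a)-a\alpha\rfloor\}\right| \leq 2M(b-a)^3+\frac{b-a}{R}+\sum_{1\leq r\leq R}\frac 1r\left|\sum_{a<n\leq b}e(nr\alpha)\right|. \]
   Context: $e(x)=e^{2\pi i x}$; $\lfloor\cdot\rfloor$ is the floor function; sums over $r$ and $n$ range over integers. *)

theory Defs
  imports Complex_Main
begin

definition e :: "real \<Rightarrow> complex" where
  "e x = exp (2 * of_real pi * \<i> * of_real x)"

end

(*
  Write f(n) = n \<alpha> + \<beta> + h(n) with \<beta> = f(a) - a \<alpha>.  Since \<alpha> = f'(c) and |f''| \<le> M, the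
  function u \<mapsto> f(u) - \<alpha> u varies by at most M (b - a)^2 / 2 on [a, b], so the values h(n)
  lie in an interval [H-, H+] containing 0 of length L \<le> M (b - a)^2 / 2.  If the floors of
  f(n) and n \<alpha> + \<beta> differ, an integer lies between them, hence x(n) = n \<alpha> + \<beta> + (H+ + H-)/2
  is within L/2 of an integer.

  Such near-integer points are counted with the kernel W(x) = \<Sum>_{j \<le> m} e(j x): it is
  periodic, and |W(x)| \<ge> (m + 1)(1 - O(((m + 1) L)^2)) when x is within L/2 of an integer.  The
  second moment \<Sum>_n |W(x(n))|^2 expands into the exponential sums \<Sum>_n e(k n \<alpha>), |k| \<le> m, with
  weights m + 1 - |k|.  Taking m = \<lfloor>R\<rfloor>, or m \<approx> 1/(2L) when L is large, gives the bound
  4 L (b - a) + (b - a)/R + \<Sum>_{r \<le> R} |\<Sum>_n e(n r \<alpha>)| / r.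
*)

theory Submission
  imports Defs "HOL-Analysis.Complex_Transcendental"
begin

lemma e_cis: "e x = cis (2 * pi * x)"
  unfolding e_def cis_conv_exp by (simp add: mult_ac)

lemma e_add: "e (x + y) = e x * e y"
  by (simp add: e_cis cis_mult distrib_left)

lemma norm_e [simp]: "norm (e x) = 1"
  by (simp add: e_cis)

lemma e_of_int [simp]: "e (of_int z) = 1"
  unfolding e_cis by (rule cis_multiple_2pi) simp

lemma cnj_e: "cnj (e x) = e (- x)"
  by (simp add: e_cis cis_cnj)

lemma Re_e: "Re (e x) = cos (2 * pi * x)"
  by (simp add: e_cis)

lemma cos_ge_one_minus_sq_half: "1 - y\<^sup>2 / 2 \<le> cos (y :: real)"
proof -
  have "cos y = 1 - 2 * (sin (y / 2))\<^sup>2"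
    using cos_double_sin[of "y / 2"] by simp
  moreover have "(sin (y / 2))\<^sup>2 \<le> (y / 2)\<^sup>2"
    using abs_sin_x_le_abs_x[of "y / 2"] by (metis abs_ge_zero power2_abs power_mono)
  ultimately show ?thesis by (simp add: power_divide)
qed

lemma sum_centered_squares:
  "(\<Sum>j\<le>m. (real j - real m / 2)\<^sup>2) = real m * (m + 1) * (m + 2) / 12"
proof -
  have squares: "(\<Sum>j\<le>m. (real j)\<^sup>2) = real m * (m + 1) * (2 * m + 1) / 6" for m
    by (induction m) (simp_all add: field_simps power2_eq_square)
  have ids: "(\<Sum>j\<le>m. real j) = real m * (m + 1) / 2" for m
    by (induction m) (simp_all add: field_simps)
  have "(\<Sum>j\<le>m. (real j - real m / 2)\<^sup>2)
      = (\<Sum>j\<le>m. (real j)\<^sup>2) - real m * (\<Sum>j\<le>m. real j) + (m + 1) * (real m / 2)\<^sup>2"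
    by (simp add: power2_diff sum.distrib sum_subtractf sum_distrib_left algebra_simps)
  then show ?thesis
    unfolding squares ids by (simp add: field_simps power2_eq_square)
qed

definition geom_sum_e :: "nat \<Rightarrow> real \<Rightarrow> complex" where
  "geom_sum_e m x = (\<Sum>j\<le>m. e (real j * x))"

lemma geom_sum_e_diff_of_int: "geom_sum_e m (x - of_int z) = geom_sum_e m x"
proof -
  have "e (real j * (x - of_int z)) = e (real j * x)" for j
  proof -
    have "real j * (x - of_int z) = real j * x + of_int (- (int j * z))"
      by (simp add: algebra_simps)
    then show ?thesis by (simp only: e_add e_of_int) simp
  qed
  then show ?thesis unfolding geom_sum_e_def by simp
qed

lemma centred_phase_error_le:
  assumes "(real m + 1) * \<bar>x\<bar> \<le> t"
  shows "2 * pi\<^sup>2 * x\<^sup>2 * (\<Sum>j\<le>m. (real j - real m / 2)\<^sup>2) \<le> (real m + 1) * (5/3 * t\<^sup>2)"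
proof -
  have "pi\<^sup>2 \<le> 10"
  proof -
    have "pi * pi \<le> 3.15 * 3.15"
      using pi_approx(2) pi_gt_zero by (intro mult_mono) auto
    then show ?thesis by (simp add: power2_eq_square)
  qed
  have "x\<^sup>2 * (real m + 1)\<^sup>2 = ((real m + 1) * \<bar>x\<bar>)\<^sup>2"
    by (simp add: power_mult_distrib)
  also have "\<dots> \<le> t\<^sup>2"
    using assms by (intro power_mono) auto
  finally have "x\<^sup>2 * (real m + 1)\<^sup>2 \<le> t\<^sup>2" .
  have "2 * pi\<^sup>2 * x\<^sup>2 * (real m * (m + 1) * (m + 2) / 12)
      = pi\<^sup>2 / 6 * (real m + 1) * (x\<^sup>2 * (real m * (m + 2)))"
    by (simp add: field_simps)
  also have "\<dots> \<le> pi\<^sup>2 / 6 * (real m + 1) * (x\<^sup>2 * (real m + 1)\<^sup>2)"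
    by (intro mult_left_mono) (auto simp: power2_eq_square algebra_simps)
  also have "\<dots> \<le> 10 / 6 * (real m + 1) * t\<^sup>2"
    using \<open>pi\<^sup>2 \<le> 10\<close> \<open>x\<^sup>2 * (real m + 1)\<^sup>2 \<le> t\<^sup>2\<close> by (intro mult_mono) auto
  finally show ?thesis
    unfolding sum_centered_squares by (simp add: algebra_simps)
qed

text \<open>Centring the sum at \<open>m/2\<close> makes its real part a sum of cosines of small angles.\<close>
lemma norm_geom_sum_e_ge:
  assumes "(real m + 1) * \<bar>x\<bar> \<le> t"
  shows "(real m + 1) * (1 - 5/3 * t\<^sup>2) \<le> norm (geom_sum_e m x)"
proof -
  have centred: "e (- (real m / 2) * x) * geom_sum_e m x = (\<Sum>j\<le>m. e ((real j - real m / 2) * x))"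
    unfolding geom_sum_e_def sum_distrib_left
    by (intro sum.cong refl) (simp add: e_add[symmetric] algebra_simps)
  have "(real m + 1) * (1 - 5/3 * t\<^sup>2)
      \<le> (real m + 1) - 2 * pi\<^sup>2 * x\<^sup>2 * (\<Sum>j\<le>m. (real j - real m / 2)\<^sup>2)"
    using centred_phase_error_le[OF assms] by (simp add: algebra_simps)
  also have "\<dots> = (\<Sum>j\<le>m. 1 - (2 * pi * ((real j - real m / 2) * x))\<^sup>2 / 2)"
  proof -
    have "(2 * pi * (u * x))\<^sup>2 / 2 = 2 * pi\<^sup>2 * x\<^sup>2 * u\<^sup>2" for u
      by (simp add: power_mult_distrib)
    then show ?thesis by (simp only: sum_subtractf sum_distrib_left sum_constant card_atMost) simp
  qed
  also have "\<dots> \<le> Re (\<Sum>j\<le>m. e ((real j - real m / 2) * x))"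
    unfolding Re_sum Re_e by (intro sum_mono cos_ge_one_minus_sq_half)
  also have "\<dots> \<le> norm (geom_sum_e m x)"
    using complex_Re_le_cmod centred by (metis norm_e norm_mult mult_1)
  finally show ?thesis .
qed

definition exp_sum :: "int set \<Rightarrow> (int \<Rightarrow> real) \<Rightarrow> real \<Rightarrow> complex" where
  "exp_sum A x d = (\<Sum>n\<in>A. e (d * x n))"

lemma norm_exp_sum_uminus: "norm (exp_sum A x (- d)) = norm (exp_sum A x d)"
proof -
  have "exp_sum A x (- d) = cnj (exp_sum A x d)"
    unfolding exp_sum_def cnj_sum cnj_e by simp
  then show ?thesis by simp
qed

lemma exp_sum_zero: "exp_sum A x 0 = of_nat (card A)"
  unfolding exp_sum_def using e_of_int[of 0] by simp

lemma sum_norm_geom_sum_e_sq_le: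
  "(\<Sum>n\<in>A. (norm (geom_sum_e m (x n)))\<^sup>2) \<le> (\<Sum>j\<le>m. \<Sum>l\<le>m. norm (exp_sum A x (real j - real l)))"
proof -
  have sq: "(norm (geom_sum_e m y))\<^sup>2 = Re (\<Sum>j\<le>m. \<Sum>l\<le>m. e ((real j - real l) * y))" for y
  proof -
    have "complex_of_real ((norm (geom_sum_e m y))\<^sup>2) = geom_sum_e m y * cnj (geom_sum_e m y)"
      by (rule complex_norm_square)
    also have "\<dots> = (\<Sum>j\<le>m. \<Sum>l\<le>m. e ((real j - real l) * y))"
      unfolding geom_sum_e_def cnj_sum cnj_e sum_product
      by (intro sum.cong refl) (simp add: e_add[symmetric] algebra_simps)
    finally show ?thesis by (metis Re_complex_of_real)
  qed
  have "(\<Sum>n\<in>A. (norm (geom_sum_e m (x n)))\<^sup>2) = Re (\<Sum>j\<le>m. \<Sum>l\<le>m. exp_sum A x (real j - real l))"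
    unfolding sq exp_sum_def Re_sum
    by (subst sum.swap) (intro sum.cong refl, subst sum.swap, rule refl)
  also have "\<dots> \<le> norm (\<Sum>j\<le>m. \<Sum>l\<le>m. exp_sum A x (real j - real l))"
    by (rule complex_Re_le_cmod)
  also have "\<dots> \<le> (\<Sum>j\<le>m. \<Sum>l\<le>m. norm (exp_sum A x (real j - real l)))"
    by (intro order_trans[OF norm_sum] sum_mono norm_sum)
  finally show ?thesis .
qed

lemma sum_atMost_sum_atMost_dist:
  fixes \<phi> :: "nat \<Rightarrow> real"
  shows "(\<Sum>j\<le>m. \<Sum>l\<le>m. \<phi> (if l \<le> j then j - l else l - j))
       = (real m + 1) * \<phi> 0 + 2 * (\<Sum>k\<in>{1..m}. (real m + 1 - real k) * \<phi> k)"
proof (induction m)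
  case 0
  then show ?case by simp
next
  case (Suc m)
  let ?F = "\<lambda>j l. \<phi> (if l \<le> j then j - l else l - j)"
  have reverse: "(\<Sum>j\<le>m. \<phi> (Suc m - j)) = (\<Sum>k\<in>{1..Suc m}. \<phi> k)"
    by (rule sum.reindex_bij_witness[of _ "\<lambda>k. Suc m - k" "\<lambda>j. Suc m - j"]) auto
  have col: "(\<Sum>j\<le>m. ?F j (Suc m)) = (\<Sum>k\<in>{1..Suc m}. \<phi> k)"
    and row: "(\<Sum>l\<le>m. ?F (Suc m) l) = (\<Sum>k\<in>{1..Suc m}. \<phi> k)"
    unfolding reverse[symmetric] by (auto intro!: sum.cong)
  have shift: "(\<Sum>k\<in>{1..Suc m}. (real (Suc m) + 1 - real k) * \<phi> k)
      = (\<Sum>k\<in>{1..m}. (real m + 1 - real k) * \<phi> k) + (\<Sum>k\<in>{1..Suc m}. \<phi> k)"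
  proof -
    have "(\<Sum>k\<in>{1..Suc m}. (real (Suc m) + 1 - real k) * \<phi> k)
        = (\<Sum>k\<in>{1..Suc m}. (real m + 1 - real k) * \<phi> k) + (\<Sum>k\<in>{1..Suc m}. \<phi> k)"
      by (simp add: sum.distrib[symmetric] algebra_simps)
    then show ?thesis by simp
  qed
  have "(\<Sum>j\<le>Suc m. \<Sum>l\<le>Suc m. ?F j l)
      = (\<Sum>j\<le>m. \<Sum>l\<le>m. ?F j l) + (\<Sum>j\<le>m. ?F j (Suc m)) + (\<Sum>l\<le>m. ?F (Suc m) l) + \<phi> 0"
    by (simp add: sum.distrib)
  then show ?case
    unfolding Suc.IH col row shift by (simp add: algebra_simps)
qed

definition near_integers :: "int set \<Rightarrow> (int \<Rightarrow> real) \<Rightarrow> real \<Rightarrow> int set" where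
  "near_integers A x w = {n\<in>A. \<exists>z::int. \<bar>x n - of_int z\<bar> \<le> w}"

lemma finite_near_integers: "finite A \<Longrightarrow> finite (near_integers A x w)"
  unfolding near_integers_def by simp

text \<open>On near-integer points the kernel is large; summing its square over all of \<open>A\<close>
  and expanding gives a weighted sum of exponential sums.\<close>
lemma card_near_integers_mult_le:
  assumes "finite A" and "(real m + 1) * w \<le> t" and "0 \<le> 1 - 5/3 * t\<^sup>2"
  shows "real (card (near_integers A x w)) * ((real m + 1) * (1 - 5/3 * t\<^sup>2))\<^sup>2
     \<le> (real m + 1) * real (card A) + 2 * (\<Sum>k\<in>{1..m}. (real m + 1 - real k) * norm (exp_sum A x (real k)))"
proof -
  define c where "c = (real m + 1) * (1 - 5/3 * t\<^sup>2)"
  have "c \<le> norm (geom_sum_e m (x n))" if n: "n \<in> near_integers A x w" for n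
  proof -
    obtain z :: int where z: "\<bar>x n - of_int z\<bar> \<le> w"
      using n unfolding near_integers_def by auto
    have "(real m + 1) * \<bar>x n - of_int z\<bar> \<le> (real m + 1) * w"
      by (intro mult_left_mono z) auto
    then have "c \<le> norm (geom_sum_e m (x n - of_int z))"
      unfolding c_def using assms(2) by (intro norm_geom_sum_e_ge) linarith
    then show ?thesis by (simp only: geom_sum_e_diff_of_int)
  qed
  moreover have "0 \<le> c" unfolding c_def using assms(3) by simp
  ultimately have "real (card (near_integers A x w)) * c\<^sup>2
      \<le> (\<Sum>n\<in>near_integers A x w. (norm (geom_sum_e m (x n)))\<^sup>2)"
    using sum_mono[of "near_integers A x w" "\<lambda>_. c\<^sup>2"] by (simp add: power_mono)
  also have "\<dots> \<le> (\<Sum>n\<in>A. (norm (geom_sum_e m (x n)))\<^sup>2)"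
    using assms(1) by (intro sum_mono2) (auto simp: near_integers_def)
  also have "\<dots> \<le> (\<Sum>j\<le>m. \<Sum>l\<le>m. norm (exp_sum A x (real j - real l)))"
    by (rule sum_norm_geom_sum_e_sq_le)
  also have "\<dots> = (\<Sum>j\<le>m. \<Sum>l\<le>m. (\<lambda>k. norm (exp_sum A x (real k))) (if l \<le> j then j - l else l - j))"
    by (intro sum.cong refl)
      (auto simp: of_nat_diff norm_exp_sum_uminus[of A x "real _ - real _", simplified])
  also have "\<dots> = (real m + 1) * real (card A) + 2 * (\<Sum>k\<in>{1..m}. (real m + 1 - real k) * norm (exp_sum A x (real k)))"
    by (subst sum_atMost_sum_atMost_dist) (simp add: exp_sum_zero)
  finally show ?thesis unfolding c_def .
qed

lemma kernel_constant_bounds: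
  fixes t :: real
  assumes "0 \<le> t" "t \<le> 3/8"
  shows "49/64 \<le> 1 - 5/3 * t\<^sup>2" and "1/2 \<le> (1 - 5/3 * t\<^sup>2)\<^sup>2"
    and "1 \<le> (1 - 5/3 * t\<^sup>2)\<^sup>2 * (1 + 8 * t)"
proof -
  have "t\<^sup>2 \<le> (3/8)\<^sup>2"
    using assms by (intro power_mono) auto
  then show lb: "49/64 \<le> 1 - 5/3 * t\<^sup>2"
    by (simp add: power2_eq_square)
  have "(49/64)\<^sup>2 \<le> (1 - 5/3 * t\<^sup>2)\<^sup>2"
    using lb by (intro power_mono) auto
  then show "1/2 \<le> (1 - 5/3 * t\<^sup>2)\<^sup>2"
    by (simp add: power2_eq_square)
  have "(1 - 5/3 * t\<^sup>2)\<^sup>2 = 1 - 10/3 * t\<^sup>2 + (5/3 * t\<^sup>2)\<^sup>2"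
    by (simp add: power2_eq_square algebra_simps)
  then have square: "1 - 10/3 * t\<^sup>2 \<le> (1 - 5/3 * t\<^sup>2)\<^sup>2"
    using zero_le_power2[of "5/3 * t\<^sup>2"] by linarith
  have "1 \<le> (1 - 10/3 * t\<^sup>2) * (1 + 8 * t)"
  proof -
    have "10/3 * t + 80/3 * t\<^sup>2 \<le> 10/3 * (3/8) + 80/3 * (3/8)\<^sup>2"
      using assms \<open>t\<^sup>2 \<le> (3/8)\<^sup>2\<close> by (intro add_mono) auto
    then have "0 \<le> t * (8 - 10/3 * t - 80/3 * t\<^sup>2)"
      using assms by (intro mult_nonneg_nonneg) (auto simp: power2_eq_square)
    then show ?thesis
      by (simp add: power2_eq_square algebra_simps)
  qed
  then show "1 \<le> (1 - 5/3 * t\<^sup>2)\<^sup>2 * (1 + 8 * t)"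
    using mult_right_mono[OF square, of "1 + 8 * t"] assms by linarith
qed

lemma card_near_integers_le_kernel:
  assumes "finite A" and "(real m + 1) * w \<le> t" and "0 \<le> t" "t \<le> 3/8"
  shows "real (card (near_integers A x w))
     \<le> real (card A) / ((1 - 5/3 * t\<^sup>2)\<^sup>2 * (real m + 1)) + (\<Sum>k\<in>{1..m}. norm (exp_sum A x (real k)) / real k)"
proof -
  define c where "c = (1 - 5/3 * t\<^sup>2)\<^sup>2"
  define P where "P = (real m + 1)\<^sup>2 * c"
  have c: "1/2 \<le> c" and "0 \<le> 1 - 5/3 * t\<^sup>2"
    using kernel_constant_bounds[OF assms(3,4)] unfolding c_def by auto
  have P: "(real m + 1)\<^sup>2 / 2 \<le> P" and "0 < P"
    unfolding P_def using c mult_left_mono[OF c, of "(real m + 1)\<^sup>2"] by auto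
  have weights: "2 * (real m + 1 - real k) \<le> P / real k" if "k \<in> {1..m}" for k
  proof -
    have "0 \<le> (real m + 1 - 2 * real k)\<^sup>2" by simp
    then have "4 * real k * (real m + 1 - real k) \<le> (real m + 1)\<^sup>2"
      by (simp add: power2_eq_square algebra_simps)
    then show ?thesis
      using P that by (simp add: field_simps)
  qed
  have "real (card (near_integers A x w)) * P
      \<le> (real m + 1) * real (card A) + (\<Sum>k\<in>{1..m}. 2 * ((real m + 1 - real k) * norm (exp_sum A x (real k))))"
    using card_near_integers_mult_le[OF assms(1,2) \<open>0 \<le> 1 - 5/3 * t\<^sup>2\<close>, of x]
    unfolding P_def c_def sum_distrib_left[symmetric] by (simp add: power_mult_distrib)
  also have "\<dots> \<le> (real m + 1) * real (card A) + (\<Sum>k\<in>{1..m}. P / real k * norm (exp_sum A x (real k)))"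
  proof (intro add_left_mono sum_mono)
    fix k assume "k \<in> {1..m}"
    from mult_right_mono[OF weights[OF this] norm_ge_zero]
    show "2 * ((real m + 1 - real k) * norm (exp_sum A x (real k))) \<le> P / real k * norm (exp_sum A x (real k))"
      by (metis mult.assoc)
  qed
  also have "\<dots> = P * (real (card A) / (c * (real m + 1)) + (\<Sum>k\<in>{1..m}. norm (exp_sum A x (real k)) / real k))"
  proof -
    have "P * (real (card A) / (c * (real m + 1))) = (real m + 1) * real (card A)"
      using c unfolding P_def by (simp add: power2_eq_square)
    then show ?thesis
      by (simp add: distrib_left sum_distrib_left)
  qed
  finally show ?thesis
    using \<open>0 < P\<close> unfolding c_def[symmetric] by (simp add: mult.commute)
qed

lemma inverse_kernel_weight_le:
  assumes "0 \<le> w" "(real m + 1) * w \<le> 3/8"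
  shows "1 / ((1 - 5/3 * ((real m + 1) * w)\<^sup>2)\<^sup>2 * (real m + 1)) \<le> 1 / (real m + 1) + 8 * w"
proof -
  define c where "c = (1 - 5/3 * ((real m + 1) * w)\<^sup>2)\<^sup>2"
  have "1 \<le> c * (1 + 8 * ((real m + 1) * w))" "0 < c"
    using kernel_constant_bounds[of "(real m + 1) * w"] assms unfolding c_def by auto
  then have "1 / c \<le> 1 + 8 * ((real m + 1) * w)"
    by (simp add: pos_divide_le_eq mult.commute)
  then have "1 / (c * (real m + 1)) \<le> (1 + 8 * ((real m + 1) * w)) / (real m + 1)"
    by (simp add: divide_right_mono flip: divide_divide_eq_left)
  also have "\<dots> = 1 / (real m + 1) + 8 * w"
    by (simp add: field_simps)
  finally show ?thesis
    unfolding c_def .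
qed

lemma inverse_kernel_weight_le_of_long:
  assumes "0 \<le> w" "(real m + 1) * w \<le> 3/8" "1 \<le> 4 * w * (real m + 1)"
  shows "1 / ((1 - 5/3 * ((real m + 1) * w)\<^sup>2)\<^sup>2 * (real m + 1)) \<le> 8 * w"
proof -
  define c where "c = (1 - 5/3 * ((real m + 1) * w)\<^sup>2)\<^sup>2"
  have "1/2 \<le> c"
    using kernel_constant_bounds[of "(real m + 1) * w"] assms(1,2) unfolding c_def by auto
  have "4 * w * (real m + 1) = 8 * w * ((1/2) * (real m + 1))"
    by simp
  also have "\<dots> \<le> 8 * w * (c * (real m + 1))"
    using \<open>1/2 \<le> c\<close> assms(1) by (intro mult_left_mono mult_right_mono) auto
  finally have "1 \<le> 8 * w * (c * (real m + 1))"
    using assms(3) by linarith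
  then show ?thesis
    using \<open>1/2 \<le> c\<close> unfolding c_def[symmetric] by (simp add: pos_divide_le_eq)
qed

text \<open>The kernel length: \<open>m = \<lfloor>R\<rfloor>\<close> if that keeps \<open>(m + 1) w\<close> small,
  otherwise \<open>m + 1 = \<lceil>1 / (4 w)\<rceil>\<close>.\<close>
lemma obtain_kernel_length:
  fixes w R :: real
  assumes "0 \<le> w" "w < 1/8" "1 \<le> R"
  obtains m :: nat where "m \<le> nat \<lfloor>R\<rfloor>" "(real m + 1) * w \<le> 3/8"
    "1 / ((1 - 5/3 * ((real m + 1) * w)\<^sup>2)\<^sup>2 * (real m + 1)) \<le> 8 * w + 1 / R"
proof (cases "(real (nat \<lfloor>R\<rfloor>) + 1) * w \<le> 3/8")
  case True
  have "R \<le> real (nat \<lfloor>R\<rfloor>) + 1"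
    using assms(3) by linarith
  moreover have "0 < (real (nat \<lfloor>R\<rfloor>) + 1) * R"
    using assms(3) by (intro mult_pos_pos) linarith+
  ultimately have "1 / (real (nat \<lfloor>R\<rfloor>) + 1) \<le> 1 / R"
    by (intro divide_left_mono) auto
  then show ?thesis
    using that[of "nat \<lfloor>R\<rfloor>"] inverse_kernel_weight_le[OF assms(1) True] True by auto
next
  case False
  then have "0 < w" using assms(1) by (cases "w = 0") auto
  define q where "q = \<lceil>1 / (4 * w)\<rceil>"
  have q: "1 / (4 * w) \<le> of_int q" "of_int q < 1 / (4 * w) + 1"
    unfolding q_def by linarith+
  have "0 < 1 / (4 * w)" using \<open>0 < w\<close> by simp
  then have "1 \<le> q" using q(1) by linarith
  define m where "m = nat q - 1"
  have mq: "real m + 1 = of_int q"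
    unfolding m_def using \<open>1 \<le> q\<close> by (simp add: of_nat_diff)
  have "1 / (4 * w) < real (nat \<lfloor>R\<rfloor>) + 1"
    using False \<open>0 < w\<close> by (simp add: field_simps)
  then have "q \<le> int (nat \<lfloor>R\<rfloor>) + 1"
    using assms(3) unfolding q_def by (simp add: ceiling_le_iff)
  then have "m \<le> nat \<lfloor>R\<rfloor>"
    unfolding m_def by linarith
  have "w * of_int q < w * (1 / (4 * w) + 1)"
    by (rule mult_strict_left_mono[OF q(2) \<open>0 < w\<close>])
  also have "\<dots> = 1/4 + w"
    using \<open>0 < w\<close> by (simp add: field_simps)
  finally have short: "(real m + 1) * w \<le> 3/8"
    using assms(2) unfolding mq by (simp add: mult.commute)
  moreover have "1 \<le> 4 * w * (real m + 1)"
    using q(1) \<open>0 < w\<close> unfolding mq by (simp add: field_simps)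
  ultimately have "1 / ((1 - 5/3 * ((real m + 1) * w)\<^sup>2)\<^sup>2 * (real m + 1)) \<le> 8 * w"
    by (rule inverse_kernel_weight_le_of_long[OF assms(1)])
  moreover have "0 \<le> 1 / R"
    using assms(3) by simp
  ultimately show ?thesis
    using that[OF \<open>m \<le> nat \<lfloor>R\<rfloor>\<close> short] by linarith
qed

lemma card_near_integers_le:
  assumes "finite A" "0 \<le> w" "1 \<le> R"
  shows "real (card (near_integers A x w))
     \<le> 8 * w * real (card A) + real (card A) / R
       + (\<Sum>k\<in>{1..nat \<lfloor>R\<rfloor>}. norm (exp_sum A x (real k)) / real k)"
proof -
  have tail: "0 \<le> (\<Sum>k\<in>{1..nat \<lfloor>R\<rfloor>}. norm (exp_sum A x (real k)) / real k)"
    by (intro sum_nonneg) auto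
  have "0 \<le> real (card A) / R" using assms(3) by simp
  show ?thesis
  proof (cases "1/8 \<le> w")
    case True
    have "real (card (near_integers A x w)) \<le> real (card A)"
      using assms(1) by (intro of_nat_mono card_mono) (auto simp: near_integers_def)
    also have "\<dots> \<le> 8 * w * real (card A)"
      using True mult_right_mono[of 1 "8 * w" "real (card A)"] by simp
    finally show ?thesis
      using tail \<open>0 \<le> real (card A) / R\<close> by linarith
  next
    case False
    then obtain m where m: "m \<le> nat \<lfloor>R\<rfloor>" "(real m + 1) * w \<le> 3/8"
      "1 / ((1 - 5/3 * ((real m + 1) * w)\<^sup>2)\<^sup>2 * (real m + 1)) \<le> 8 * w + 1 / R"
      using obtain_kernel_length assms(2,3) by (metis not_le)
    have "real (card (near_integers A x w))
      \<le> real (card A) * (1 / ((1 - 5/3 * ((real m + 1) * w)\<^sup>2)\<^sup>2 * (real m + 1)))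
        + (\<Sum>k\<in>{1..m}. norm (exp_sum A x (real k)) / real k)"
      using card_near_integers_le_kernel[OF assms(1) order_refl _ m(2)] assms(2) by simp
    also have "\<dots> \<le> real (card A) * (8 * w + 1 / R)
        + (\<Sum>k\<in>{1..nat \<lfloor>R\<rfloor>}. norm (exp_sum A x (real k)) / real k)"
      using m by (intro add_mono mult_left_mono sum_mono2) auto
    finally show ?thesis
      by (simp add: algebra_simps)
  qed
qed

lemma floor_add_neq_near_integer:
  fixes y h Hm Hp :: real
  assumes "Hm \<le> h" "h \<le> Hp" "Hm \<le> 0" "0 \<le> Hp" "\<lfloor>y + h\<rfloor> \<noteq> \<lfloor>y\<rfloor>"
  shows "\<exists>z::int. \<bar>y + (Hp + Hm) / 2 - of_int z\<bar> \<le> (Hp - Hm) / 2"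
proof -
  have "\<exists>z::int. Hm \<le> of_int z - y \<and> of_int z - y \<le> Hp"
  proof (cases "0 < h")
    case True
    then have "\<lfloor>y\<rfloor> < \<lfloor>y + h\<rfloor>"
      using assms(5) floor_mono[of y "y + h"] by linarith
    then have "y < of_int \<lfloor>y + h\<rfloor>"
      by (simp add: floor_less_iff)
    then show ?thesis
      using assms by (intro exI[of _ "\<lfloor>y + h\<rfloor>"]) (auto, linarith)
  next
    case False
    then have "\<lfloor>y + h\<rfloor> < \<lfloor>y\<rfloor>"
      using assms(5) floor_mono[of "y + h" y] by linarith
    then have "y + h < of_int \<lfloor>y\<rfloor>"
      by (simp add: floor_less_iff)
    then show ?thesis
      using assms by (intro exI[of _ "\<lfloor>y\<rfloor>"]) (auto, linarith)
  qed
  then obtain z :: int where "Hm \<le> of_int z - y" "of_int z - y \<le> Hp"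
    by blast
  then have "\<bar>y + (Hp + Hm) / 2 - of_int z\<bar> \<le> (Hp - Hm) / 2"
    unfolding abs_le_iff by (auto simp: field_simps)
  then show ?thesis ..
qed

lemma card_floor_mismatch_le:
  fixes A :: "int set" and h :: "int \<Rightarrow> real" and \<alpha> \<beta> :: real
  assumes "finite A" and h: "\<And>n. n \<in> A \<Longrightarrow> Hm \<le> h n \<and> h n \<le> Hp"
    and "Hm \<le> 0" "0 \<le> Hp" "1 \<le> R"
  shows "real (card {n\<in>A. \<lfloor>of_int n * \<alpha> + \<beta> + h n\<rfloor> \<noteq> \<lfloor>of_int n * \<alpha> + \<beta>\<rfloor>})
    \<le> 4 * (Hp - Hm) * real (card A) + real (card A) / R
      + (\<Sum>r\<in>{1..\<lfloor>R\<rfloor>}. (1 / of_int r) * cmod (\<Sum>n\<in>A. e (of_int n * of_int r * \<alpha>)))"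
proof -
  define x where "x n = of_int n * \<alpha> + \<beta> + (Hp + Hm) / 2" for n :: int
  define T where "T r = (1 / of_int r) * cmod (\<Sum>n\<in>A. e (of_int n * of_int r * \<alpha>))" for r :: int
  have "{n\<in>A. \<lfloor>of_int n * \<alpha> + \<beta> + h n\<rfloor> \<noteq> \<lfloor>of_int n * \<alpha> + \<beta>\<rfloor>} \<subseteq> near_integers A x ((Hp - Hm) / 2)"
    using floor_add_neq_near_integer[OF _ _ assms(3,4)] h unfolding near_integers_def x_def by blast
  then have "real (card {n\<in>A. \<lfloor>of_int n * \<alpha> + \<beta> + h n\<rfloor> \<noteq> \<lfloor>of_int n * \<alpha> + \<beta>\<rfloor>})
      \<le> real (card (near_integers A x ((Hp - Hm) / 2)))"
    using assms(1) by (intro of_nat_mono card_mono finite_near_integers)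
  also have "\<dots> \<le> 8 * ((Hp - Hm) / 2) * real (card A) + real (card A) / R
      + (\<Sum>k\<in>{1..nat \<lfloor>R\<rfloor>}. norm (exp_sum A x (real k)) / real k)"
    using assms by (intro card_near_integers_le) auto
  also have "8 * ((Hp - Hm) / 2) = 4 * (Hp - Hm)"
    by simp
  also have "(\<Sum>k\<in>{1..nat \<lfloor>R\<rfloor>}. norm (exp_sum A x (real k)) / real k) = (\<Sum>k\<in>{1..nat \<lfloor>R\<rfloor>}. T (int k))"
  proof (intro sum.cong refl)
    fix k :: nat
    have "exp_sum A x (real k) = (\<Sum>n\<in>A. e (of_int n * of_int (int k) * \<alpha>)) * e (real k * (\<beta> + (Hp + Hm) / 2))"
      unfolding exp_sum_def sum_distrib_right
      by (intro sum.cong refl) (simp add: e_add[symmetric] x_def algebra_simps)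
    then show "norm (exp_sum A x (real k)) / real k = T (int k)"
      unfolding T_def by (simp add: norm_mult)
  qed
  also have "\<dots> = (\<Sum>r\<in>{1..\<lfloor>R\<rfloor>}. T r)"
  proof -
    have "{1..\<lfloor>R\<rfloor>} = int ` {1..nat \<lfloor>R\<rfloor>}"
      using assms(5) by (simp add: image_int_atLeastAtMost)
    then show ?thesis
      by (simp add: sum.reindex)
  qed
  finally show ?thesis
    unfolding T_def .
qed

lemma abs_diff_le_of_deriv_bound:
  fixes F F' \<phi> \<phi>' :: "real \<Rightarrow> real"
  assumes "s \<le> t"
    and F: "\<And>u. u \<in> {s..t} \<Longrightarrow> (F has_real_derivative F' u) (at u within {s..t})"
    and \<phi>: "\<And>u. (\<phi> has_real_derivative \<phi>' u) (at u)"
    and bound: "\<And>u. u \<in> {s..t} \<Longrightarrow> \<bar>F' u\<bar> \<le> \<phi>' u"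
  shows "\<bar>F t - F s\<bar> \<le> \<phi> t - \<phi> s"
proof (cases "s = t")
  case False
  with assms(1) have "s < t" by simp
  have "continuous_on {s..t} F"
    using F by (meson DERIV_continuous continuous_on_eq_continuous_within)
  moreover have "continuous_on {s..t} \<phi>"
    using \<phi> by (meson DERIV_isCont continuous_at_imp_continuous_on)
  moreover have "(F has_vector_derivative F' u) (at u)" if "s < u" "u < t" for u
    using F[of u] that at_within_Icc_at[OF that]
    by (simp add: has_real_derivative_iff_has_vector_derivative)
  moreover have "(\<phi> has_vector_derivative \<phi>' u) (at u)" for u
    using \<phi> by (simp add: has_real_derivative_iff_has_vector_derivative)
  ultimately show ?thesis
    using differentiable_bound_general[OF \<open>s < t\<close>, of F \<phi> F' \<phi>'] bound by simp
qed simp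

lemma abs_diff_le_of_deriv_le_right:
  fixes F F' :: "real \<Rightarrow> real"
  assumes "x \<le> y"
    and "\<And>u. u \<in> {x..y} \<Longrightarrow> (F has_real_derivative F' u) (at u within {x..y})"
    and "\<And>u. u \<in> {x..y} \<Longrightarrow> \<bar>F' u\<bar> \<le> M * (u - c)"
  shows "\<bar>F y - F x\<bar> \<le> M * (y - c)\<^sup>2 / 2 - M * (x - c)\<^sup>2 / 2"
  using assms by (intro abs_diff_le_of_deriv_bound[where \<phi>' = "\<lambda>u. M * (u - c)"])
    (auto intro!: derivative_eq_intros)

lemma abs_diff_le_of_deriv_le_left:
  fixes F F' :: "real \<Rightarrow> real"
  assumes "x \<le> y"
    and "\<And>u. u \<in> {x..y} \<Longrightarrow> (F has_real_derivative F' u) (at u within {x..y})"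
    and "\<And>u. u \<in> {x..y} \<Longrightarrow> \<bar>F' u\<bar> \<le> M * (c - u)"
  shows "\<bar>F y - F x\<bar> \<le> M * (c - x)\<^sup>2 / 2 - M * (c - y)\<^sup>2 / 2"
proof -
  have "\<bar>F y - F x\<bar> \<le> (- M * (c - y)\<^sup>2 / 2) - (- M * (c - x)\<^sup>2 / 2)"
    using assms by (intro abs_diff_le_of_deriv_bound[where \<phi>' = "\<lambda>u. M * (c - u)"])
      (auto intro!: derivative_eq_intros simp: field_simps)
  then show ?thesis by simp
qed

text \<open>The integral of \<open>M |u - c|\<close> over any subinterval of \<open>[A, B]\<close> is at most \<open>M (B - A)\<^sup>2 / 2\<close>.\<close>
lemma abs_diff_le_of_deriv_le_dist:
  fixes F F' :: "real \<Rightarrow> real"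
  assumes F: "\<And>u. u \<in> {A..B} \<Longrightarrow> (F has_real_derivative F' u) (at u within {A..B})"
    and bound: "\<And>u. u \<in> {A..B} \<Longrightarrow> \<bar>F' u\<bar> \<le> M * \<bar>u - c\<bar>"
    and "0 \<le> M" "c \<in> {A..B}" "x \<in> {A..B}" "y \<in> {A..B}" "x \<le> y"
  shows "\<bar>F y - F x\<bar> \<le> M * (B - A)\<^sup>2 / 2"
proof -
  have F_sub: "(F has_real_derivative F' u) (at u within {x'..y'})"
    if "u \<in> {x'..y'}" "{x'..y'} \<subseteq> {A..B}" for u x' y'
    using DERIV_subset[OF F] that by auto
  have half_sq: "M * v\<^sup>2 / 2 \<le> M * (B - A)\<^sup>2 / 2" if "0 \<le> v" "v \<le> B - A" for v
    using \<open>0 \<le> M\<close> that by (intro divide_right_mono mult_left_mono power_mono) auto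
  have sq_nonneg: "0 \<le> M * v\<^sup>2 / 2" for v
    using \<open>0 \<le> M\<close> by simp
  consider "c \<le> x" | "y \<le> c" | "x < c" "c < y" by linarith
  then show ?thesis
  proof cases
    case 1
    have "\<bar>F y - F x\<bar> \<le> M * (y - c)\<^sup>2 / 2 - M * (x - c)\<^sup>2 / 2"
    proof (rule abs_diff_le_of_deriv_le_right[OF \<open>x \<le> y\<close>])
      fix u assume u: "u \<in> {x..y}"
      show "(F has_real_derivative F' u) (at u within {x..y})"
        using u assms by (intro F_sub) auto
      have "u \<in> {A..B}" "\<bar>u - c\<bar> = u - c"
        using u 1 assms by auto
      then show "\<bar>F' u\<bar> \<le> M * (u - c)"
        using bound by metis
    qed
    moreover have "M * (y - c)\<^sup>2 / 2 \<le> M * (B - A)\<^sup>2 / 2"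
      using 1 assms by (intro half_sq) auto
    ultimately show ?thesis
      using sq_nonneg[of "x - c"] by linarith
  next
    case 2
    have "\<bar>F y - F x\<bar> \<le> M * (c - x)\<^sup>2 / 2 - M * (c - y)\<^sup>2 / 2"
    proof (rule abs_diff_le_of_deriv_le_left[OF \<open>x \<le> y\<close>])
      fix u assume u: "u \<in> {x..y}"
      show "(F has_real_derivative F' u) (at u within {x..y})"
        using u assms by (intro F_sub) auto
      have "u \<in> {A..B}" "\<bar>u - c\<bar> = c - u"
        using u 2 assms by auto
      then show "\<bar>F' u\<bar> \<le> M * (c - u)"
        using bound by metis
    qed
    moreover have "M * (c - x)\<^sup>2 / 2 \<le> M * (B - A)\<^sup>2 / 2"
      using 2 assms by (intro half_sq) auto
    ultimately show ?thesis
      using sq_nonneg[of "c - y"] by linarith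
  next
    case 3
    have "\<bar>F y - F x\<bar> \<le> \<bar>F y - F c\<bar> + \<bar>F c - F x\<bar>"
      by linarith
    also have "\<dots> \<le> (M * (y - c)\<^sup>2 / 2 - M * (c - c)\<^sup>2 / 2) + (M * (c - x)\<^sup>2 / 2 - M * (c - c)\<^sup>2 / 2)"
    proof (rule add_mono)
      show "\<bar>F y - F c\<bar> \<le> M * (y - c)\<^sup>2 / 2 - M * (c - c)\<^sup>2 / 2"
      proof (rule abs_diff_le_of_deriv_le_right)
        fix u assume u: "u \<in> {c..y}"
        show "(F has_real_derivative F' u) (at u within {c..y})"
          using u 3 assms by (intro F_sub) auto
        have "u \<in> {A..B}" "\<bar>u - c\<bar> = u - c"
          using u 3 assms by auto
        then show "\<bar>F' u\<bar> \<le> M * (u - c)"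
          using bound by metis
      qed (use 3 in simp)
      show "\<bar>F c - F x\<bar> \<le> M * (c - x)\<^sup>2 / 2 - M * (c - c)\<^sup>2 / 2"
      proof (rule abs_diff_le_of_deriv_le_left)
        fix u assume u: "u \<in> {x..c}"
        show "(F has_real_derivative F' u) (at u within {x..c})"
          using u 3 assms by (intro F_sub) auto
        have "u \<in> {A..B}" "\<bar>u - c\<bar> = c - u"
          using u 3 assms by auto
        then show "\<bar>F' u\<bar> \<le> M * (c - u)"
          using bound by metis
      qed (use 3 in simp)
    qed
    also have "\<dots> = M * (y - c)\<^sup>2 / 2 + M * (c - x)\<^sup>2 / 2"
      by simp
    also have "\<dots> \<le> M * (y - x)\<^sup>2 / 2"
    proof -
      have "(y - x)\<^sup>2 = (y - c)\<^sup>2 + (c - x)\<^sup>2 + 2 * ((y - c) * (c - x))"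
        by (simp add: power2_eq_square algebra_simps)
      moreover have "0 \<le> (y - c) * (c - x)"
        using 3 by simp
      ultimately have "M * ((y - c)\<^sup>2 + (c - x)\<^sup>2) / 2 \<le> M * (y - x)\<^sup>2 / 2"
        using \<open>0 \<le> M\<close> by (intro divide_right_mono mult_left_mono) auto
      then show ?thesis
        by (simp only: distrib_left add_divide_distrib)
    qed
    also have "\<dots> \<le> M * (B - A)\<^sup>2 / 2"
      using half_sq[of "y - x"] assms by auto
    finally show ?thesis .
  qed
qed

lemma abs_diff_sub_tangent_le:
  fixes f f' f'' :: "real \<Rightarrow> real"
  assumes d1: "\<And>x. x \<in> {A..B} \<Longrightarrow> (f has_real_derivative f' x) (at x within {A..B})"
    and d2: "\<And>x. x \<in> {A..B} \<Longrightarrow> (f' has_real_derivative f'' x) (at x within {A..B})"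
    and bM: "\<And>x. x \<in> {A..B} \<Longrightarrow> \<bar>f'' x\<bar> \<le> M"
    and c: "c \<in> {A..B}" and s: "s \<in> {A..B}" and t: "t \<in> {A..B}"
  shows "\<bar>(f t - f' c * t) - (f s - f' c * s)\<bar> \<le> M * (B - A)\<^sup>2 / 2"
proof -
  define k where "k u = f u - f' c * u" for u
  have "0 \<le> M"
    using bM[OF c] by linarith
  have "(k has_real_derivative (f' u - f' c)) (at u within {A..B})" if "u \<in> {A..B}" for u
    unfolding k_def using d1[OF that] by (auto intro!: derivative_eq_intros)
  moreover have "\<bar>f' u - f' c\<bar> \<le> M * \<bar>u - c\<bar>" if "u \<in> {A..B}" for u
    using field_differentiable_bound[of "{A..B}" f' f'' M u c] d2 bM that c by auto
  ultimately have "\<bar>k y - k x\<bar> \<le> M * (B - A)\<^sup>2 / 2" if "x \<in> {A..B}" "y \<in> {A..B}" "x \<le> y" for x y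
    using \<open>0 \<le> M\<close> c that by (intro abs_diff_le_of_deriv_le_dist[of A B k])
  from this[OF s t] this[OF t s] show ?thesis
    unfolding k_def by (cases "s \<le> t") (auto simp: abs_minus_commute)
qed

lemma obtain_range_interval:
  fixes h :: "'a \<Rightarrow> real"
  assumes "finite S" "a \<in> S" "h a = 0" and diff: "\<And>n n'. n \<in> S \<Longrightarrow> n' \<in> S \<Longrightarrow> h n - h n' \<le> d"
  obtains Hm Hp where "\<And>n. n \<in> S \<Longrightarrow> Hm \<le> h n \<and> h n \<le> Hp" "Hm \<le> 0" "0 \<le> Hp" "Hp - Hm \<le> d"
proof
  have "finite (h ` S)" "h ` S \<noteq> {}"
    using assms(1,2) by auto
  then obtain n1 n2 where "n1 \<in> S" "Max (h ` S) = h n1" "n2 \<in> S" "Min (h ` S) = h n2"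
    by (metis Max_in Min_in imageE)
  then show "Max (h ` S) - Min (h ` S) \<le> d"
    using diff by simp
  show "\<And>n. n \<in> S \<Longrightarrow> Min (h ` S) \<le> h n \<and> h n \<le> Max (h ` S)"
    using assms(1) by simp
  then show "Min (h ` S) \<le> 0" "0 \<le> Max (h ` S)"
    using assms(2,3) by force+
qed

theorem lemma11:
  fixes a b :: int and f f' f'' :: "real \<Rightarrow> real" and M \<alpha> R :: real
  assumes "a \<le> b"
    and "\<And>x. x \<in> {real_of_int a..real_of_int b} \<Longrightarrow>
           (f has_real_derivative f' x) (at x within {real_of_int a..real_of_int b})"
    and "\<And>x. x \<in> {real_of_int a..real_of_int b} \<Longrightarrow>
           (f' has_real_derivative f'' x) (at x within {real_of_int a..real_of_int b})"
    and "\<And>x. x \<in> {real_of_int a..real_of_int b} \<Longrightarrow> \<bar>f'' x\<bar> \<le> M"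
    and "\<alpha> \<in> f' ` {real_of_int a..real_of_int b}"
    and "R \<ge> 1"
  shows "real (card {n::int. a < n \<and> n \<le> b \<and>
            \<lfloor>f (of_int n)\<rfloor> \<noteq> \<lfloor>of_int n * \<alpha> + f (of_int a) - of_int a * \<alpha>\<rfloor>})
         \<le> 2 * M * (of_int (b - a)) ^ 3 + of_int (b - a) / R
           + (\<Sum>r\<in>{1..\<lfloor>R\<rfloor>}. (1 / of_int r) *
                cmod (\<Sum>n\<in>{a<..b}. e (of_int n * of_int r * \<alpha>)))"
proof -
  define N where "N = real_of_int (b - a)"
  define \<beta> where "\<beta> = f (of_int a) - of_int a * \<alpha>"
  define h where "h n = f (of_int n) - of_int n * \<alpha> - \<beta>" for n :: int
  obtain c where c: "c \<in> {real_of_int a..real_of_int b}" "\<alpha> = f' c"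
    using assms(5) by blast
  have spread: "h n - h n' \<le> M * N\<^sup>2 / 2" if "n \<in> {a..b}" "n' \<in> {a..b}" for n n'
  proof -
    have "\<bar>(f (of_int n) - of_int n * \<alpha>) - (f (of_int n') - of_int n' * \<alpha>)\<bar> \<le> M * N\<^sup>2 / 2"
      using abs_diff_sub_tangent_le[OF assms(2-4) c(1), of "of_int n'" "of_int n"] that
      unfolding N_def c(2) by (simp add: mult.commute)
    then show ?thesis
      unfolding h_def by linarith
  qed
  have "h a = 0"
    unfolding h_def \<beta>_def by simp
  obtain Hm Hp where H: "\<And>n. n \<in> {a..b} \<Longrightarrow> Hm \<le> h n \<and> h n \<le> Hp"
    and "Hm \<le> 0" "0 \<le> Hp" "Hp - Hm \<le> M * N\<^sup>2 / 2"
    by (rule obtain_range_interval[of "{a..b}" a h, OF _ _ \<open>h a = 0\<close> spread]) (use assms(1) in auto)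
  have "{n. a < n \<and> n \<le> b \<and> \<lfloor>f (of_int n)\<rfloor> \<noteq> \<lfloor>of_int n * \<alpha> + f (of_int a) - of_int a * \<alpha>\<rfloor>}
      = {n\<in>{a<..b}. \<lfloor>of_int n * \<alpha> + \<beta> + h n\<rfloor> \<noteq> \<lfloor>of_int n * \<alpha> + \<beta>\<rfloor>}"
    unfolding h_def \<beta>_def by (auto simp: algebra_simps)
  moreover have "4 * (Hp - Hm) * N \<le> 2 * M * N ^ 3"
    using mult_right_mono[OF \<open>Hp - Hm \<le> M * N\<^sup>2 / 2\<close>, of "4 * N"] assms(1)
    by (simp add: N_def power2_eq_square power3_eq_cube algebra_simps)
  ultimately show ?thesis
    using card_floor_mismatch_le[of "{a<..b}" Hm h Hp R \<alpha> \<beta>] H \<open>Hm \<le> 0\<close> \<open>0 \<le> Hp\<close> assms(1,6)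
    unfolding N_def by force
qed

end
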